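(* Let $D\ge1$, let $F:\mathbb R\to\mathbb R^+$ be strictly decreasing with $A(\alpha):=\int_{\mathbb R^D}F(\frac12|v|^2+\alpha)\,dv<\infty$ for all $\alpha\in\mathbb R$, let $b:=-A^{-1}:(0,\infty)\to\mathbb R$, and let $B\in C^1(0,\infty)$ satisfy $B'=b$, with $\lim_{s\to0^+}B(s)$ existing and $B(0):=\lim_{s\to 0^+}B(s)=0$. Then: (i) $\inf_{s\ge 0}B(s)$ is finite; (ii) $\inf_{s>0}s\,b(s)$ is finite, and for every $s>0$, $s\,b_-(s)\le B_-(s)$.
   Context: Under the assumptions on $F$, $A$ is a continuous strictly decreasing bijection of $\mathbb R$ onto $(0,\infty)$, so $A^{-1}:(0,\infty)\to\mathbb R$ is well defined (and strictly decreasing, so $B$ is strictly convex). For a real number $x$, $x_-:=\max\{-x,0\}$ denotes the negative part. *)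

theory Defs
  imports "HOL-Analysis.Analysis"
begin

definition negpart :: "real \<Rightarrow> real" where
  "negpart x = max (- x) 0"

end

theory Submission
  imports Defs
begin

text \<open>
  The mass function \<open>A\<close> is positive, continuous and strictly decreasing, tends to \<open>0\<close> at \<open>+\<infinity>\<close>
  and is unbounded at \<open>-\<infinity>\<close>; hence it is a bijection onto \<open>(0, \<infinity>)\<close>, and \<open>b = -A\<^sup>-\<^sup>1\<close> is
  nondecreasing with a zero at \<open>s\<^sub>0 = A 0\<close>. So \<open>B\<close> is convex: it is minimal at \<open>s\<^sub>0\<close>, which
  gives (i), and lies below its tangent lines, so \<open>B s = B s - B 0 \<le> s b(s)\<close>, which together
  with (i) gives (ii).
\<close>

lemma integral_less_lborel:
  fixes f g :: "'a::euclidean_space \<Rightarrow> real"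
  assumes f: "integrable lborel f" and g: "integrable lborel g" and less: "\<And>x. f x < g x"
  shows "integral\<^sup>L lborel f < integral\<^sup>L lborel g"
proof -
  have "integral\<^sup>L lborel (\<lambda>x. g x - f x) \<noteq> 0"
  proof
    assume "integral\<^sup>L lborel (\<lambda>x. g x - f x) = 0"
    then have "AE x in lborel. g x - f x = 0"
      using integral_nonneg_eq_0_iff_AE[OF Bochner_Integration.integrable_diff[OF g f]] less
      by (simp add: less_imp_le)
    then have "AE x in (lborel :: 'a measure). False"
    proof (rule eventually_mono)
      show "g x - f x = 0 \<Longrightarrow> False" for x
        using less[of x] by simp
    qed
    then show False
      by (auto simp: AE_iff_null null_sets_def)
  qed
  moreover have "integral\<^sup>L lborel (\<lambda>x. g x - f x) \<ge> 0"
    using less by (simp add: less_imp_le)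
  ultimately show ?thesis
    using Bochner_Integration.integral_diff[OF g f] by simp
qed

lemma integrable_const_lborel_iff:
  "integrable (lborel :: 'a::euclidean_space measure) (\<lambda>_. c :: real) \<longleftrightarrow> c = 0"
proof
  assume "integrable (lborel :: 'a measure) (\<lambda>_. c)"
  then have "ennreal \<bar>c\<bar> * emeasure lborel (UNIV :: 'a set) < \<infinity>"
    by (simp add: integrable_iff_bounded)
  then show "c = 0"
    by (simp add: ennreal_mult_less_top)
qed simp

lemma antimono_tendsto_Inf_at_top:
  fixes f :: "real \<Rightarrow> real"
  assumes "antimono f" "bdd_below (range f)"
  shows "(f \<longlongrightarrow> Inf (range f)) at_top"
proof (rule order_tendstoI)
  fix a assume "a < Inf (range f)"
  then have "a < f x" for x
    using cInf_lower[OF rangeI assms(2)] by (rule less_le_trans)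
  then show "eventually (\<lambda>x. a < f x) at_top"
    by (simp add: always_eventually)
next
  fix a assume "Inf (range f) < a"
  then obtain z where "f z < a"
    using cInf_lessD[of "range f" a] by auto
  then have "f x < a" if "z \<le> x" for x
    using antimonoD[OF assms(1) that] by linarith
  then show "eventually (\<lambda>x. f x < a) at_top"
    unfolding eventually_at_top_linorder by blast
qed

lemma IVT_UNIV:
  fixes f :: "real \<Rightarrow> real"
  assumes "continuous_on UNIV f" "f a \<le> y" "y \<le> f b"
  shows "\<exists>x. f x = y"
proof (cases "a \<le> b")
  case True
  then show ?thesis
    using IVT'[of f a y b] continuous_on_subset[OF assms(1) subset_UNIV] assms(2,3) by auto
next
  case False
  then show ?thesis
    using IVT2'[of f a y b] continuous_on_subset[OF assms(1) subset_UNIV] assms(2,3) by auto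
qed

lemma MVT_diff_le:
  fixes f f' :: "real \<Rightarrow> real"
  assumes "a \<le> b" "continuous_on {a..b} f"
    and "\<And>x. a < x \<Longrightarrow> x < b \<Longrightarrow> (f has_real_derivative f' x) (at x)"
    and "\<And>x. a < x \<Longrightarrow> x < b \<Longrightarrow> f' x \<le> c"
  shows "f b - f a \<le> (b - a) * c"
proof (cases "a = b")
  case False
  then obtain l z where "a < z" "z < b" "(f has_real_derivative l) (at z)" "f b - f a = (b - a) * l"
    using MVT[of a b f] assms(1-3) by (auto simp: real_differentiable_def)
  then show ?thesis
    using assms by (metis DERIV_unique mult_left_mono diff_ge_0_iff_ge)
qed simp

lemma MVT_diff_ge:
  fixes f f' :: "real \<Rightarrow> real"
  assumes "a \<le> b" "continuous_on {a..b} f"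
    and "\<And>x. a < x \<Longrightarrow> x < b \<Longrightarrow> (f has_real_derivative f' x) (at x)"
    and "\<And>x. a < x \<Longrightarrow> x < b \<Longrightarrow> c \<le> f' x"
  shows "(b - a) * c \<le> f b - f a"
proof -
  have "- f b - - f a \<le> (b - a) * - c"
    by (rule MVT_diff_le[where f' = "\<lambda>x. - f' x"])
       (use assms in \<open>auto intro: continuous_on_minus DERIV_minus\<close>)
  then show ?thesis by simp
qed

lemma continuous_on_atLeastI:
  fixes f :: "real \<Rightarrow> real"
  assumes "(f \<longlongrightarrow> f a) (at_right a)" "\<And>x. a < x \<Longrightarrow> isCont f x"
  shows "continuous_on {a..} f"
  unfolding continuous_on_eq_continuous_within
proof
  fix x assume "x \<in> {a..}"
  show "continuous (at x within {a..}) f"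
  proof (cases "x = a")
    case True
    then show ?thesis
      using assms(1) by (simp add: continuous_within at_within_Ici_at_right)
  next
    case False
    with \<open>x \<in> {a..}\<close> show ?thesis
      using assms(2) by (simp add: continuous_at_imp_continuous_within)
  qed
qed

lemma negpart_antimono: "x \<le> y \<Longrightarrow> negpart y \<le> negpart x"
  by (simp add: negpart_def)

lemma negpart_mult_pos: "0 < s \<Longrightarrow> s * negpart x = negpart (s * x)"
  by (simp add: negpart_def max_mult_distrib_left)

text \<open>A discontinuity \<open>c\<close> of the monotone \<open>F\<close> only matters on the null sphere \<open>\<bar>v\<bar>\<^sup>2/2 + \<alpha> = c\<close>,
  and there are only countably many of them.\<close>
lemma AE_isCont_kinetic:
  fixes F :: "real \<Rightarrow> real"
  assumes "antimono F"
  shows "AE v in (lborel :: 'a::euclidean_space measure). isCont F (norm v ^ 2 / 2 + \<alpha>)"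
proof (rule AE_I')
  have "countable {c. \<not> isCont F c}"
  proof (rule countable_subset[OF _ mono_ctble_discont])
    show "mono (\<lambda>x. - F x)"
      by (rule monoI) (simp add: antimonoD[OF assms])
    show "{c. \<not> isCont F c} \<subseteq> {c. \<not> isCont (\<lambda>x. - F x) c}"
    proof (rule Collect_mono)
      show "\<not> isCont F c \<longrightarrow> \<not> isCont (\<lambda>x. - F x) c" for c
        using isCont_minus[of c "\<lambda>x. - F x"] by auto
    qed
  qed
  moreover have "sphere (0::'a) r \<in> null_sets lborel" for r
    using negligible_sphere[of "0::'a" r]
    by (auto simp: null_sets_completion_iff negligible_iff_null_sets negligible_convex_frontier)
  ultimately show "(\<Union>c\<in>{c. \<not> isCont F c}. sphere (0::'a) (sqrt (2 * (c - \<alpha>)))) \<in> null_sets lborel"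
    by (rule null_sets_UN')
  show "{v \<in> space lborel. \<not> isCont F (norm v ^ 2 / 2 + \<alpha>)}
      \<subseteq> (\<Union>c\<in>{c. \<not> isCont F c}. sphere (0::'a) (sqrt (2 * (c - \<alpha>))))"
  proof
    fix v :: 'a assume "v \<in> {v \<in> space lborel. \<not> isCont F (norm v ^ 2 / 2 + \<alpha>)}"
    moreover have "v \<in> sphere 0 (sqrt (2 * ((norm v ^ 2 / 2 + \<alpha>) - \<alpha>)))"
      by simp
    ultimately show "v \<in> (\<Union>c\<in>{c. \<not> isCont F c}. sphere 0 (sqrt (2 * (c - \<alpha>))))"
      by blast
  qed
qed

lemma kinetic_integral_dominated_convergence:
  fixes F :: "real \<Rightarrow> real" and X :: "nat \<Rightarrow> real"
  assumes F_nonneg: "\<And>x. 0 \<le> F x" and F_antimono: "antimono F"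
    and F_int: "\<And>\<alpha>. integrable (lborel :: 'a::euclidean_space measure) (\<lambda>v. F (norm v ^ 2 / 2 + \<alpha>))"
    and X_ge: "\<And>n. c \<le> X n"
    and L_meas: "L \<in> borel_measurable (lborel :: 'a measure)"
    and lim: "AE v in lborel. (\<lambda>n. F (norm v ^ 2 / 2 + X n)) \<longlonglongrightarrow> L v"
  shows "integrable lborel L"
    and "(\<lambda>n. \<integral>v. F (norm v ^ 2 / 2 + X n) \<partial>(lborel :: 'a measure)) \<longlonglongrightarrow> integral\<^sup>L lborel L"
proof -
  have meas: "(\<lambda>v. F (norm v ^ 2 / 2 + X n)) \<in> borel_measurable (lborel :: 'a measure)" for n
    by (rule borel_measurable_integrable[OF F_int])
  have bound: "AE v in (lborel :: 'a measure). norm (F (norm v ^ 2 / 2 + X n)) \<le> F (norm v ^ 2 / 2 + c)"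
    for n
    using F_nonneg X_ge by (intro AE_I2) (simp add: antimonoD[OF F_antimono])
  note dc = meas F_int[of c] lim bound
  show "integrable lborel L"
    by (rule integrable_dominated_convergence[OF L_meas dc])
  show "(\<lambda>n. \<integral>v. F (norm v ^ 2 / 2 + X n) \<partial>(lborel :: 'a measure)) \<longlonglongrightarrow> integral\<^sup>L lborel L"
    by (rule integral_dominated_convergence[OF L_meas dc])
qed

lemma continuous_kinetic_integral:
  fixes F :: "real \<Rightarrow> real"
  assumes F_nonneg: "\<And>x. 0 \<le> F x" and F_antimono: "antimono F"
    and F_int: "\<And>\<alpha>. integrable (lborel :: 'a::euclidean_space measure) (\<lambda>v. F (norm v ^ 2 / 2 + \<alpha>))"
  shows "continuous_on UNIV (\<lambda>\<alpha>. \<integral>v. F (norm v ^ 2 / 2 + \<alpha>) \<partial>(lborel :: 'a measure))"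
proof (intro continuous_at_imp_continuous_on ballI)
  fix \<alpha> :: real
  have "continuous_on {\<alpha> - 1<..} (\<lambda>\<alpha>. \<integral>v. F (norm v ^ 2 / 2 + \<alpha>) \<partial>(lborel :: 'a measure))"
    unfolding continuous_on_sequentially comp_def
  proof (intro allI ballI impI, elim conjE)
    fix X :: "nat \<Rightarrow> real" and \<beta>
    assume X: "\<forall>n. X n \<in> {\<alpha> - 1<..}" "X \<longlonglongrightarrow> \<beta>"
    have lim: "AE v in (lborel :: 'a measure). (\<lambda>n. F (norm v ^ 2 / 2 + X n)) \<longlonglongrightarrow> F (norm v ^ 2 / 2 + \<beta>)"
      using AE_isCont_kinetic[OF F_antimono, of \<beta>]
      by eventually_elim (intro isCont_tendsto_compose[of _ F] tendsto_add tendsto_const X(2))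
    show "(\<lambda>n. \<integral>v. F (norm v ^ 2 / 2 + X n) \<partial>(lborel :: 'a measure))
        \<longlonglongrightarrow> (\<integral>v. F (norm v ^ 2 / 2 + \<beta>) \<partial>(lborel :: 'a measure))"
      by (rule kinetic_integral_dominated_convergence(2)[OF F_nonneg F_antimono F_int _
            borel_measurable_integrable[OF F_int] lim, where c = "\<alpha> - 1"])
         (use X(1) in \<open>auto intro: less_imp_le\<close>)
  qed
  then show "isCont (\<lambda>\<alpha>. \<integral>v. F (norm v ^ 2 / 2 + \<alpha>) \<partial>(lborel :: 'a measure)) \<alpha>"
    by (rule continuous_on_interior) (simp add: interior_open)
qed

text \<open>The pointwise limit at \<open>+\<infinity>\<close> is the constant \<open>inf F\<close>, which is integrable only if it is \<open>0\<close>.\<close>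
lemma ex_kinetic_integral_less:
  fixes F :: "real \<Rightarrow> real"
  assumes F_nonneg: "\<And>x. 0 \<le> F x" and F_antimono: "antimono F"
    and F_int: "\<And>\<alpha>. integrable (lborel :: 'a::euclidean_space measure) (\<lambda>v. F (norm v ^ 2 / 2 + \<alpha>))"
    and "0 < s"
  shows "\<exists>\<alpha>. (\<integral>v. F (norm v ^ 2 / 2 + \<alpha>) \<partial>(lborel :: 'a measure)) < s"
proof -
  define c where "c = Inf (range F)"
  have "(F \<longlongrightarrow> c) at_top"
    unfolding c_def using F_nonneg by (intro antimono_tendsto_Inf_at_top F_antimono bdd_belowI2)
  then have lim: "(\<lambda>n. F (y + real n)) \<longlonglongrightarrow> c" for y
    by (rule filterlim_compose[OF _ filterlim_tendsto_add_at_top[OF tendsto_const filterlim_real_sequentially]])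
  note dc = kinetic_integral_dominated_convergence[OF F_nonneg F_antimono F_int, of 0 real "\<lambda>_. c"]
  have "c = 0"
    using dc(1) lim by (simp add: integrable_const_lborel_iff)
  then have "(\<lambda>n. \<integral>v. F (norm v ^ 2 / 2 + real n) \<partial>(lborel :: 'a measure)) \<longlonglongrightarrow> 0"
    using dc(2) lim by simp
  then have "eventually (\<lambda>n. (\<integral>v. F (norm v ^ 2 / 2 + real n) \<partial>(lborel :: 'a measure)) < s) sequentially"
    using \<open>0 < s\<close> by (rule order_tendstoD)
  then obtain N where "\<forall>n\<ge>N. (\<integral>v. F (norm v ^ 2 / 2 + real n) \<partial>(lborel :: 'a measure)) < s"
    by (auto simp: eventually_sequentially)
  then show ?thesis by blast
qed

text \<open>For \<open>\<alpha> = -r\<^sup>2/2\<close> the integrand is at least \<open>F 0\<close> on the ball of radius \<open>r\<close>, whose volume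
  grows at least linearly in \<open>r \<ge> 1\<close>.\<close>
lemma ex_kinetic_integral_greater:
  fixes F :: "real \<Rightarrow> real"
  assumes F_pos: "\<And>x. 0 < F x" and F_antimono: "antimono F"
    and F_int: "\<And>\<alpha>. integrable (lborel :: 'a::euclidean_space measure) (\<lambda>v. F (norm v ^ 2 / 2 + \<alpha>))"
  shows "\<exists>\<alpha>. s < (\<integral>v. F (norm v ^ 2 / 2 + \<alpha>) \<partial>(lborel :: 'a measure))"
proof -
  define V where "V = unit_ball_vol (real DIM('a))"
  define r where "r = \<bar>s\<bar> / (F 0 * V) + 1"
  have "0 < V" "0 < F 0"
    using F_pos by (simp_all add: V_def)
  then have r: "1 \<le> r" "F 0 * (V * r) = \<bar>s\<bar> + F 0 * V"
    by (simp_all add: r_def field_simps)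
  have "r \<le> r ^ DIM('a)"
    using power_increasing[of 1 "DIM('a)" r] r(1) by (simp add: DIM_positive Suc_le_eq)
  have ball_int: "integrable lborel (indicator (cball (0::'a) r) :: 'a \<Rightarrow> real)"
    by (intro integrable_real_indicator emeasure_bounded_finite) auto
  have "s < F 0 * (V * r)"
    using r(2) mult_pos_pos[OF \<open>0 < F 0\<close> \<open>0 < V\<close>] abs_ge_self[of s] by linarith
  also have "\<dots> \<le> F 0 * (V * r ^ DIM('a))"
    using \<open>r \<le> r ^ DIM('a)\<close> \<open>0 < V\<close> \<open>0 < F 0\<close> by (intro mult_left_mono) simp_all
  also have "\<dots> = (\<integral>v. F 0 * indicator (cball (0::'a) r) v \<partial>lborel)"
    using r by (simp add: content_cball V_def)
  also have "\<dots> \<le> (\<integral>v. F (norm v ^ 2 / 2 - r ^ 2 / 2) \<partial>(lborel :: 'a measure))"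
  proof (rule integral_mono)
    show "F 0 * indicator (cball 0 r) v \<le> F (norm v ^ 2 / 2 - r ^ 2 / 2)" for v :: 'a
    proof (cases "v \<in> cball 0 r")
      case True
      then have "norm v ^ 2 \<le> r ^ 2"
        by (intro power_mono) auto
      then show ?thesis
        using True antimonoD[OF F_antimono, of "norm v ^ 2 / 2 - r ^ 2 / 2" 0] by simp
    qed (use F_pos in \<open>simp add: less_imp_le\<close>)
  qed (use ball_int F_int[of "- (r ^ 2 / 2)"] in simp_all)
  finally have "s < (\<integral>v. F (norm v ^ 2 / 2 + - (r ^ 2 / 2)) \<partial>(lborel :: 'a measure))"
    by simp
  then show ?thesis ..
qed

lemma neg_inverse_of_strict_antimono:
  fixes A b :: "real \<Rightarrow> real"
  assumes A_decr: "\<And>\<alpha> \<beta>. \<alpha> < \<beta> \<Longrightarrow> A \<beta> < A \<alpha>"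
    and A_pos: "\<And>\<alpha>. 0 < A \<alpha>"
    and A_onto: "\<And>s. 0 < s \<Longrightarrow> \<exists>\<alpha>. A \<alpha> = s"
    and b_def: "\<And>s. 0 < s \<Longrightarrow> b s = - (THE \<alpha>. A \<alpha> = s)"
  shows neg_inverse_apply: "b (A \<gamma>) = - \<gamma>"
    and mono_on_neg_inverse: "mono_on {0<..} b"
proof -
  have inv: "b (A \<gamma>) = - \<gamma>" for \<gamma>
  proof -
    have "(THE \<alpha>. A \<alpha> = A \<gamma>) = \<gamma>"
    proof (rule the_equality)
      show "\<alpha> = \<gamma>" if "A \<alpha> = A \<gamma>" for \<alpha>
        using A_decr[of \<alpha> \<gamma>] A_decr[of \<gamma> \<alpha>] that by (cases \<alpha> \<gamma> rule: linorder_cases) auto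
    qed simp
    then show ?thesis
      using b_def[OF A_pos] by simp
  qed
  then show "b (A \<gamma>) = - \<gamma>" .
  show "mono_on {0<..} b"
  proof (rule mono_onI)
    fix s t :: real assume "s \<in> {0<..}" "t \<in> {0<..}" "s \<le> t"
    moreover obtain \<alpha> \<beta> where "A \<alpha> = s" "A \<beta> = t"
      using A_onto \<open>s \<in> {0<..}\<close> \<open>t \<in> {0<..}\<close> by (metis greaterThan_iff)
    ultimately have "\<beta> \<le> \<alpha>"
      using A_decr[of \<alpha> \<beta>] by (cases "\<beta> \<le> \<alpha>") auto
    with \<open>A \<alpha> = s\<close> \<open>A \<beta> = t\<close> show "b s \<le> b t"
      using inv by auto
  qed
qed

lemma diff_le_mult_of_mono_deriv:
  fixes B b :: "real \<Rightarrow> real"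
  assumes B_cont: "continuous_on {a..} B"
    and B_deriv: "\<And>x. a < x \<Longrightarrow> (B has_real_derivative b x) (at x)"
    and b_mono: "mono_on {a<..} b"
    and "a < s"
  shows "B s - B a \<le> (s - a) * b s"
proof (rule MVT_diff_le[where f' = b])
  show "continuous_on {a..s} B"
    by (rule continuous_on_subset[OF B_cont]) auto
qed (use assms in \<open>auto intro: mono_onD[OF b_mono]\<close>)

lemma min_at_zero_of_mono_deriv:
  fixes B b :: "real \<Rightarrow> real"
  assumes B_cont: "continuous_on {a..} B"
    and B_deriv: "\<And>x. a < x \<Longrightarrow> (B has_real_derivative b x) (at x)"
    and b_mono: "mono_on {a<..} b"
    and "a < s\<^sub>0" "b s\<^sub>0 = 0" "a \<le> s"
  shows "B s\<^sub>0 \<le> B s"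
proof -
  have cont: "continuous_on {x..y} B" if "a \<le> x" for x y
    by (rule continuous_on_subset[OF B_cont]) (use that in auto)
  have b_le: "b x \<le> 0" if "a < x" "x \<le> s\<^sub>0" for x
    using mono_onD[OF b_mono, of x s\<^sub>0] that assms(4,5) by simp
  have b_ge: "0 \<le> b x" if "s\<^sub>0 \<le> x" for x
    using mono_onD[OF b_mono, of s\<^sub>0 x] that assms(4,5) by simp
  show ?thesis
  proof (cases "s \<le> s\<^sub>0")
    case True
    have "B s\<^sub>0 - B s \<le> (s\<^sub>0 - s) * 0"
      by (rule MVT_diff_le[where f' = b]) (use assms True cont b_le in auto)
    then show ?thesis by simp
  next
    case False
    have "(s - s\<^sub>0) * 0 \<le> B s - B s\<^sub>0"
      by (rule MVT_diff_ge[where f' = b]) (use assms False cont b_ge in auto)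
    then show ?thesis by simp
  qed
qed

lemma neg_inverse_kinetic_integral:
  fixes F A b :: "real \<Rightarrow> real"
  assumes F_pos: "\<And>x. 0 < F x" and F_decr: "\<And>x y. x < y \<Longrightarrow> F y < F x"
    and F_int: "\<And>\<alpha>. integrable (lborel :: 'a::euclidean_space measure) (\<lambda>v. F (norm v ^ 2 / 2 + \<alpha>))"
    and A_def: "\<And>\<alpha>. A \<alpha> = (\<integral>v. F (norm v ^ 2 / 2 + \<alpha>) \<partial>(lborel :: 'a measure))"
    and b_def: "\<And>s. 0 < s \<Longrightarrow> b s = - (THE \<alpha>. A \<alpha> = s)"
  shows "mono_on {0<..} b" and "\<exists>s\<^sub>0>0. b s\<^sub>0 = 0"
proof -
  have A_eq: "A = (\<lambda>\<alpha>. \<integral>v. F (norm v ^ 2 / 2 + \<alpha>) \<partial>(lborel :: 'a measure))"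
    using A_def by auto
  have F_antimono: "antimono F"
  proof (rule antimonoI)
    show "F y \<le> F x" if "x \<le> y" for x y
      using F_decr[of x y] that by (cases "x = y") auto
  qed
  note F_facts = F_pos[THEN less_imp_le] F_antimono F_int
  have A_pos: "0 < A \<alpha>" for \<alpha>
    using integral_less_lborel[of "\<lambda>_. 0" "\<lambda>v::'a. F (norm v ^ 2 / 2 + \<alpha>)"] F_pos F_int
    unfolding A_eq by simp
  have A_decr: "A \<beta> < A \<alpha>" if "\<alpha> < \<beta>" for \<alpha> \<beta>
    unfolding A_eq using F_decr that by (intro integral_less_lborel F_int) simp
  have A_cont: "continuous_on UNIV A"
    unfolding A_eq by (rule continuous_kinetic_integral[OF F_facts])
  have A_onto: "\<exists>\<alpha>. A \<alpha> = s" if s: "0 < s" for s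
  proof -
    obtain \<alpha>\<^sub>1 where "A \<alpha>\<^sub>1 < s"
      using ex_kinetic_integral_less[OF F_facts s] unfolding A_eq ..
    moreover obtain \<alpha>\<^sub>2 where "s < A \<alpha>\<^sub>2"
      using ex_kinetic_integral_greater[OF F_pos F_antimono F_int] unfolding A_eq ..
    ultimately show ?thesis
      using IVT_UNIV[OF A_cont, of \<alpha>\<^sub>1 s \<alpha>\<^sub>2] by simp
  qed
  show "mono_on {0<..} b"
    by (rule mono_on_neg_inverse) (use A_decr A_pos A_onto b_def in auto)
  have "b (A 0) = - 0"
    by (rule neg_inverse_apply) (use A_decr A_pos A_onto b_def in auto)
  then show "\<exists>s\<^sub>0>0. b s\<^sub>0 = 0"
    using A_pos[of 0] by (auto intro!: exI[of _ "A 0"])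
qed

lemma convex_potential_bounds:
  fixes B b :: "real \<Rightarrow> real"
  assumes B_cont: "continuous_on {0..} B" and B0: "B 0 = 0"
    and B_deriv: "\<And>s. 0 < s \<Longrightarrow> (B has_real_derivative b s) (at s)"
    and b_mono: "mono_on {0<..} b"
    and s\<^sub>0: "0 < s\<^sub>0" "b s\<^sub>0 = 0"
  shows "bdd_below (B ` {0..}) \<and>
         bdd_below ((\<lambda>s. s * b s) ` {0<..}) \<and>
         (\<forall>s>0. s * negpart (b s) \<le> negpart (B s))"
proof -
  have tangent: "B s \<le> s * b s" if "0 < s" for s
    using diff_le_mult_of_mono_deriv[OF B_cont B_deriv b_mono that] B0 by simp
  have min: "B s\<^sub>0 \<le> B s" if "0 \<le> s" for s
    using min_at_zero_of_mono_deriv[OF B_cont B_deriv b_mono s\<^sub>0 that] .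
  have "bdd_below (B ` {0..})"
    using min by (intro bdd_belowI2[where m = "B s\<^sub>0"]) simp
  moreover have "bdd_below ((\<lambda>s. s * b s) ` {0<..})"
  proof (rule bdd_belowI2[where m = "B s\<^sub>0"])
    show "B s\<^sub>0 \<le> s * b s" if "s \<in> {0<..}" for s
      using that min[of s] tangent[of s] by simp
  qed
  moreover have "s * negpart (b s) \<le> negpart (B s)" if "0 < s" for s
    using that by (simp add: negpart_mult_pos negpart_antimono tangent)
  ultimately show ?thesis by blast
qed

theorem mainTheorem2:
  fixes F :: "real \<Rightarrow> real"
    and A :: "real \<Rightarrow> real"
    and b :: "real \<Rightarrow> real"
    and B :: "real \<Rightarrow> real"
  assumes F_pos: "\<forall>x. F x > 0"
    and F_decr: "\<forall>x y. x < y \<longrightarrow> F y < F x"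
    and F_int: "\<forall>\<alpha>. integrable (lborel :: ('a::euclidean_space) measure) (\<lambda>v. F (norm v ^ 2 / 2 + \<alpha>))"
    and A_def: "\<forall>\<alpha>. A \<alpha> = (\<integral>v. F (norm v ^ 2 / 2 + \<alpha>) \<partial>(lborel :: 'a measure))"
    and b_def: "\<forall>s>0. b s = - (THE \<alpha>. A \<alpha> = s)"
    and B_deriv: "\<forall>s>0. (B has_real_derivative b s) (at s)"
    and B'_cont: "continuous_on {0<..} b"
    and B_lim: "(B \<longlongrightarrow> 0) (at_right 0)"
    and B0: "B 0 = 0"
  shows "bdd_below (B ` {0..}) \<and>
         bdd_below ((\<lambda>s. s * b s) ` {0<..}) \<and>
         (\<forall>s>0. s * negpart (b s) \<le> negpart (B s))"
proof -
  note mass_facts = F_pos[rule_format] F_decr[rule_format] F_int[rule_format] A_def[rule_format]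
    b_def[rule_format]
  have b_mono: "mono_on {0<..} b"
    by (rule neg_inverse_kinetic_integral(1)[where F = F and A = A]) (use mass_facts in auto)
  have "\<exists>s\<^sub>0>0. b s\<^sub>0 = 0"
    by (rule neg_inverse_kinetic_integral(2)[where F = F and A = A]) (use mass_facts in auto)
  then obtain s\<^sub>0 where s\<^sub>0: "0 < s\<^sub>0" "b s\<^sub>0 = 0"
    by blast
  have B_cont: "continuous_on {0..} B"
    using B_lim B0 B_deriv by (intro continuous_on_atLeastI) (auto intro: DERIV_isCont)
  show ?thesis
    by (rule convex_potential_bounds[OF B_cont B0 _ b_mono s\<^sub>0]) (use B_deriv in auto)
qed

end
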